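(* In the construction below, let $P_0,\dots,P_K$ be partitions of $X$ such that every part of $P_k$ has diameter at most $\tau^{-k}$, and for $x\in X$ define $\psi_k(x):=\mathsf f_k\big(B_X(P_k(x),\tau^{-k}/2)\big)$, where $P_k(x)$ is the part of $P_k$ containing $x$. Then for every $x\in X$, $\langle(\psi_0(x),0),(\psi_1(x),1),\dots,(\psi_K(x),K)\rangle$ is a directed path in $\mathcal D$, i.e. $(\psi_k(x),\psi_{k+1}(x))\in A_k$ for all $k\in\{0,\dots,K-1\}$.
   Context: Construction. Let $(X,d)$ be a metric space with $n=|X|\ge2$ and $\mathrm{diam}(X)=1$. For $S\subseteq X$, $r\ge0$: $B_X(S,r):=\{x\in X:\exists s\in S,\ d(x,s)\le r\}$ and $B_X(x,r):=B_X(\{x\},r)$. Let $\varepsilon_0:=\min\{d(x,y):x\ne y\}$, $\tau:=12$, $K:=1+\lceil\log_\tau(1/\varepsilon_0)\rceil$. For $\eta>0$ the greedy $\eta$-net is built as: $N_0=\emptyset$; for $j\ge1$, $S_j:=X\setminus B_X(N_{j-1},\eta)$; if $S_j=\emptyset$ output $N_{j-1}$; else pick $x_j\in S_j$ maximizing $|B_X(x,\eta/3)|$ and set $N_j=N_{j-1}\cup\{x_j\}$. For $k=0,\dots,K$ let $U_k$ be the greedy $\tau^{-k}$-net. For $k<K$, $A_k$ is the set of pairs $(u,u')\in U_k\times U_{k+1}$ with (i) $d(u,u')\le4\tau^{-k}$ and (ii) $|B_X(u,\tau^{-k}/3)|\ge\max\{|B_X(w,\tau^{-k}/3)|:w\in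 B_X(u',6\tau^{-(k+1)})\}$. The directed graph $\mathcal D$ has vertex set $\{(u,k):u\in U_k,\ 0\le k\le K\}$ and arcs $((u,k),(u',k+1))$ for $(u,u')\in A_k$. For nonempty $S\subseteq X$, $\mathsf f_k(S)$ denotes a (fixed) maximizer of $|B_X(y,\tau^{-k}/3)|$ over $y\in B_X(S,2\tau^{-k})\cap U_k$. *)

theory Defs
  imports Complex_Main "HOL-Library.Disjoint_Sets"
begin

definition metric_on :: "'a set \<Rightarrow> ('a \<Rightarrow> 'a \<Rightarrow> real) \<Rightarrow> bool" where
  "metric_on X d \<longleftrightarrow>
     (\<forall>x\<in>X. \<forall>y\<in>X. 0 \<le> d x y \<and> (d x y = 0 \<longleftrightarrow> x = y) \<and> d x y = d y x) \<and>
     (\<forall>x\<in>X. \<forall>y\<in>X. \<forall>z\<in>X. d x z \<le> d x y + d y z)"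

definition diam :: "'a set \<Rightarrow> ('a \<Rightarrow> 'a \<Rightarrow> real) \<Rightarrow> real" where
  "diam X d = Max {d x y | x y. x \<in> X \<and> y \<in> X}"

definition eps0 :: "'a set \<Rightarrow> ('a \<Rightarrow> 'a \<Rightarrow> real) \<Rightarrow> real" where
  "eps0 X d = Min {d x y | x y. x \<in> X \<and> y \<in> X \<and> x \<noteq> y}"

definition ballS :: "'a set \<Rightarrow> ('a \<Rightarrow> 'a \<Rightarrow> real) \<Rightarrow> 'a set \<Rightarrow> real \<Rightarrow> 'a set" where
  "ballS X d S r = {x \<in> X. \<exists>s\<in>S. d x s \<le> r}"

definition ball1 :: "'a set \<Rightarrow> ('a \<Rightarrow> 'a \<Rightarrow> real) \<Rightarrow> 'a \<Rightarrow> real \<Rightarrow> 'a set" where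
  "ball1 X d x r = ballS X d {x} r"

definition tau :: real where "tau = 12"

definition scale :: "nat \<Rightarrow> real" where "scale k = inverse (tau ^ k)"

definition Kpar :: "'a set \<Rightarrow> ('a \<Rightarrow> 'a \<Rightarrow> real) \<Rightarrow> nat" where
  "Kpar X d = nat (1 + \<lceil>log tau (1 / eps0 X d)\<rceil>)"

text \<open>A run of the greedy eta-net procedure: the list of chosen points x_1,...,x_m.\<close>
definition greedy_run :: "'a set \<Rightarrow> ('a \<Rightarrow> 'a \<Rightarrow> real) \<Rightarrow> real \<Rightarrow> 'a list \<Rightarrow> bool" where
  "greedy_run X d eta xs \<longleftrightarrow>
     (\<forall>j < length xs.
        xs ! j \<in> X - ballS X d (set (take j xs)) eta \<and>
        (\<forall>y \<in> X - ballS X d (set (take j xs)) eta.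
            card (ball1 X d y (eta / 3)) \<le> card (ball1 X d (xs ! j) (eta / 3)))) \<and>
     X - ballS X d (set xs) eta = {}"

text \<open>N is an output of the greedy eta-net procedure (for some admissible tie-breaking).\<close>
definition greedy_net :: "'a set \<Rightarrow> ('a \<Rightarrow> 'a \<Rightarrow> real) \<Rightarrow> real \<Rightarrow> 'a set \<Rightarrow> bool" where
  "greedy_net X d eta N \<longleftrightarrow> (\<exists>xs. greedy_run X d eta xs \<and> N = set xs)"

definition arcs :: "'a set \<Rightarrow> ('a \<Rightarrow> 'a \<Rightarrow> real) \<Rightarrow> (nat \<Rightarrow> 'a set) \<Rightarrow> nat \<Rightarrow> ('a \<times> 'a) set" where
  "arcs X d U k = {(u, u'). u \<in> U k \<and> u' \<in> U (Suc k) \<and>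
      d u u' \<le> 4 * scale k \<and>
      card (ball1 X d u (scale k / 3)) \<ge>
        Max ((\<lambda>w. card (ball1 X d w (scale k / 3))) ` ball1 X d u' (6 * scale (Suc k)))}"

definition is_f_k :: "'a set \<Rightarrow> ('a \<Rightarrow> 'a \<Rightarrow> real) \<Rightarrow> (nat \<Rightarrow> 'a set) \<Rightarrow> nat \<Rightarrow> ('a set \<Rightarrow> 'a) \<Rightarrow> bool" where
  "is_f_k X d U k fk \<longleftrightarrow>
     (\<forall>S. S \<subseteq> X \<and> S \<noteq> {} \<longrightarrow>
        fk S \<in> ballS X d S (2 * scale k) \<inter> U k \<and>
        (\<forall>y \<in> ballS X d S (2 * scale k) \<inter> U k.
            card (ball1 X d y (scale k / 3)) \<le> card (ball1 X d (fk S) (scale k / 3))))"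

definition part_of :: "'a set set \<Rightarrow> 'a \<Rightarrow> 'a set" where
  "part_of P x = (THE p. p \<in> P \<and> x \<in> p)"

end

theory Submission
  imports Defs
begin

text \<open>Let \<open>S\<^sub>k = B(P\<^sub>k(x), \<tau>\<^sup>-\<^sup>k/2)\<close>. Since \<open>x \<in> S\<^sub>k\<close> and \<open>P\<^sub>k(x)\<close> has diameter at most
  \<open>\<tau>\<^sup>-\<^sup>k\<close>, the point \<open>\<psi>\<^sub>k(x) = f\<^sub>k(S\<^sub>k)\<close> lies within \<open>2\<tau>\<^sup>-\<^sup>k + \<tau>\<^sup>-\<^sup>k/2 + \<tau>\<^sup>-\<^sup>k = 7/2 \<tau>\<^sup>-\<^sup>k\<close>
  of \<open>x\<close>; hence consecutive points are within \<open>7/2 (1 + 1/\<tau>) \<tau>\<^sup>-\<^sup>k \<le> 4\<tau>\<^sup>-\<^sup>k\<close> of each other.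
  For the weight condition, take \<open>w\<close> within \<open>6\<tau>\<^sup>-\<^sup>k\<^sup>-\<^sup>1\<close> of \<open>\<psi>\<^sub>k\<^sub>+\<^sub>1(x)\<close>. The first point \<open>y\<close>
  of the greedy net \<open>U\<^sub>k\<close> within \<open>\<tau>\<^sup>-\<^sup>k\<close> of \<open>w\<close> was chosen while \<open>w\<close> was still a candidate,
  so \<open>|B(y, \<tau>\<^sup>-\<^sup>k/3)| \<ge> |B(w, \<tau>\<^sup>-\<^sup>k/3)|\<close>; and \<open>d(y, x) \<le> (1 + 6/\<tau> + 7/(2\<tau>)) \<tau>\<^sup>-\<^sup>k \<le> 2\<tau>\<^sup>-\<^sup>k\<close>,
  so \<open>y\<close> competes in the maximisation defining \<open>\<psi>\<^sub>k(x)\<close>.\<close>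

lemma metric_on_dist_self: "metric_on X d \<Longrightarrow> x \<in> X \<Longrightarrow> d x x = 0"
  unfolding metric_on_def by blast

lemma metric_on_sym: "metric_on X d \<Longrightarrow> x \<in> X \<Longrightarrow> y \<in> X \<Longrightarrow> d x y = d y x"
  unfolding metric_on_def by blast

lemma metric_on_triangle:
  "metric_on X d \<Longrightarrow> x \<in> X \<Longrightarrow> y \<in> X \<Longrightarrow> z \<in> X \<Longrightarrow> d x z \<le> d x y + d y z"
  unfolding metric_on_def by blast

lemma scale_pos: "scale k > 0"
  unfolding scale_def tau_def by simp

lemma scale_Suc: "scale (Suc k) = scale k / 12"
  unfolding scale_def tau_def by (simp add: field_simps)

lemma part_of_partition_on:
  assumes "partition_on X Q" "x \<in> X"
  shows "part_of Q x \<in> Q" "x \<in> part_of Q x"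
proof -
  obtain p where p: "p \<in> Q" "x \<in> p"
    using partition_onD1[OF assms(1)] assms(2) by auto
  have "q = p" if "q \<in> Q" "x \<in> q" for q
    using disjointD[OF partition_onD2[OF assms(1)] that(1) p(1)] that(2) p(2) by blast
  then have "part_of Q x = p"
    unfolding part_of_def using p by (intro the_equality) blast+
  with p show "part_of Q x \<in> Q" "x \<in> part_of Q x" by simp_all
qed

lemma greedy_net_subset:
  assumes "greedy_net X d eta N"
  shows "N \<subseteq> X"
proof
  fix y assume "y \<in> N"
  obtain xs where run: "greedy_run X d eta xs" and N: "N = set xs"
    using assms unfolding greedy_net_def by blast
  from \<open>y \<in> N\<close> N obtain j where "j < length xs" "xs ! j = y"
    by (metis in_set_conv_nth)
  with run show "y \<in> X"
    unfolding greedy_run_def by blast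
qed

lemma greedy_net_dominates:
  assumes "greedy_net X d eta N" "w \<in> X"
  obtains y where "y \<in> N" "d w y \<le> eta"
    "card (ball1 X d w (eta / 3)) \<le> card (ball1 X d y (eta / 3))"
proof -
  obtain xs where run: "greedy_run X d eta xs" and N: "N = set xs"
    using assms(1) unfolding greedy_net_def by blast
  have "w \<in> ballS X d (set xs) eta"
    using run assms(2) unfolding greedy_run_def by blast
  then obtain s where "s \<in> set xs" "d w s \<le> eta"
    unfolding ballS_def by blast
  then have ex: "\<exists>j. j < length xs \<and> d w (xs ! j) \<le> eta"
    by (metis in_set_conv_nth)
  define j where "j = (LEAST j. j < length xs \<and> d w (xs ! j) \<le> eta)"
  have j: "j < length xs \<and> d w (xs ! j) \<le> eta"
    unfolding j_def by (rule LeastI_ex[OF ex])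
  have before_j: "\<not> d w (xs ! i) \<le> eta" if "i < j" for i
    using j not_less_Least[of i "\<lambda>j. j < length xs \<and> d w (xs ! j) \<le> eta"] that
    unfolding j_def by (metis order.strict_trans)
  have "w \<notin> ballS X d (set (take j xs)) eta"
  proof
    assume "w \<in> ballS X d (set (take j xs)) eta"
    then obtain s where "s \<in> set (take j xs)" "d w s \<le> eta"
      unfolding ballS_def by blast
    then obtain i where "i < j" "xs ! i = s"
      by (auto simp: in_set_conv_nth)
    with before_j \<open>d w s \<le> eta\<close> show False by blast
  qed
  with assms(2) run j have "card (ball1 X d w (eta / 3)) \<le> card (ball1 X d (xs ! j) (eta / 3))"
    unfolding greedy_run_def by blast
  with j N show thesis
    by (intro that) simp_all
qed

lemma is_f_k_near_part:
  assumes "metric_on X d" "is_f_k X d U k fk" "partition_on X Q"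
    and diam_part: "\<And>p a b. p \<in> Q \<Longrightarrow> a \<in> p \<Longrightarrow> b \<in> p \<Longrightarrow> d a b \<le> scale k"
    and "x \<in> X"
  defines "u \<equiv> fk (ballS X d (part_of Q x) (scale k / 2))"
  shows "u \<in> U k \<inter> X" "d u x \<le> 7/2 * scale k"
    and "\<And>y. y \<in> U k \<inter> X \<Longrightarrow> d y x \<le> 2 * scale k \<Longrightarrow>
            card (ball1 X d y (scale k / 3)) \<le> card (ball1 X d u (scale k / 3))"
proof -
  define S where "S = ballS X d (part_of Q x) (scale k / 2)"
  have xp: "x \<in> part_of Q x" and pQ: "part_of Q x \<in> Q"
    using part_of_partition_on[OF assms(3,5)] by simp_all
  have SX: "S \<subseteq> X"
    unfolding S_def ballS_def by blast
  have xS: "x \<in> S"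
    using xp assms(5) metric_on_dist_self[OF assms(1,5)] scale_pos[of k]
    unfolding S_def ballS_def by force
  have near: "d s x \<le> 3/2 * scale k" if sS: "s \<in> S" for s
  proof -
    obtain a where a: "a \<in> part_of Q x" "d s a \<le> scale k / 2" and sX: "s \<in> X"
      using sS unfolding S_def ballS_def by blast
    have "a \<in> X" using partition_onD1[OF assms(3)] pQ a(1) by blast
    then have "d s x \<le> d s a + d a x"
      using metric_on_triangle[OF assms(1) sX _ assms(5)] by blast
    with a diam_part[OF pQ a(1) xp] show ?thesis by linarith
  qed
  have uS: "u = fk S"
    unfolding u_def S_def ..
  have u: "u \<in> ballS X d S (2 * scale k) \<inter> U k"
    and u_max: "\<And>y. y \<in> ballS X d S (2 * scale k) \<inter> U k \<Longrightarrow>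
                card (ball1 X d y (scale k / 3)) \<le> card (ball1 X d u (scale k / 3))"
    using assms(2) SX xS unfolding is_f_k_def uS by blast+
  obtain s where s: "s \<in> S" "d u s \<le> 2 * scale k" and uX: "u \<in> X"
    using u unfolding ballS_def by blast
  show "u \<in> U k \<inter> X"
    using u uX by blast
  have "d u x \<le> d u s + d s x"
    using metric_on_triangle[OF assms(1) uX _ assms(5)] SX s(1) by blast
  then show "d u x \<le> 7/2 * scale k"
    using s(2) near[OF s(1)] by linarith
  show "card (ball1 X d y (scale k / 3)) \<le> card (ball1 X d u (scale k / 3))"
    if "y \<in> U k \<inter> X" "d y x \<le> 2 * scale k" for y
  proof -
    have "y \<in> ballS X d S (2 * scale k)"
      using that xS unfolding ballS_def by blast
    with that(1) show ?thesis using u_max by blast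
  qed
qed

lemma arc_of_near_points:
  assumes "finite X" "metric_on X d" "greedy_net X d (scale k) (U k)" "x \<in> X"
    and u: "u \<in> U k \<inter> X" "d u x \<le> 7/2 * scale k"
    and u': "u' \<in> U (Suc k) \<inter> X" "d u' x \<le> 7/2 * scale (Suc k)"
    and u_max: "\<And>y. y \<in> U k \<inter> X \<Longrightarrow> d y x \<le> 2 * scale k \<Longrightarrow>
                  card (ball1 X d y (scale k / 3)) \<le> card (ball1 X d u (scale k / 3))"
  shows "(u, u') \<in> arcs X d U k"
proof -
  note tri = metric_on_triangle[OF assms(2)] and sym = metric_on_sym[OF assms(2)]
  have "d u u' \<le> d u x + d u' x"
    using tri[of u x u'] sym[of x u'] u u' assms(4) by simp
  then have close: "d u u' \<le> 4 * scale k"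
    using u(2) u'(2) scale_Suc[of k] scale_pos[of k] by simp
  have "card (ball1 X d w (scale k / 3)) \<le> card (ball1 X d u (scale k / 3))"
    if w: "w \<in> ball1 X d u' (6 * scale (Suc k))" for w
  proof -
    have wX: "w \<in> X" and "d w u' \<le> 6 * scale (Suc k)"
      using w unfolding ball1_def ballS_def by auto
    obtain y where y: "y \<in> U k" "d w y \<le> scale k"
      and w_le_y: "card (ball1 X d w (scale k / 3)) \<le> card (ball1 X d y (scale k / 3))"
      using greedy_net_dominates[OF assms(3) wX] by blast
    have yX: "y \<in> X" using greedy_net_subset[OF assms(3)] y(1) by blast
    have "d y x \<le> d w y + (d w u' + d u' x)"
      using tri[of y w x] tri[of w u' x] sym[of y w] yX wX u' assms(4) by simp
    then have "d y x \<le> 2 * scale k"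
      using y(2) \<open>d w u' \<le> _\<close> u'(2) scale_Suc[of k] scale_pos[of k] by simp
    with u_max[of y] w_le_y y(1) yX show ?thesis by simp
  qed
  moreover have "u' \<in> ball1 X d u' (6 * scale (Suc k))"
    using u' metric_on_dist_self[OF assms(2)] scale_pos[of "Suc k"]
    unfolding ball1_def ballS_def by simp
  moreover have "finite (ball1 X d u' (6 * scale (Suc k)))"
    using assms(1) unfolding ball1_def ballS_def by simp
  ultimately show ?thesis
    unfolding arcs_def using u(1) u'(1) close by (auto intro!: Max.boundedI)
qed

theorem lemma3p8:
  fixes X :: "'a set" and d :: "'a \<Rightarrow> 'a \<Rightarrow> real"
    and U :: "nat \<Rightarrow> 'a set" and f :: "nat \<Rightarrow> 'a set \<Rightarrow> 'a"
    and P :: "nat \<Rightarrow> 'a set set"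
  assumes "finite X" and "card X \<ge> 2" and "metric_on X d" and "diam X d = 1"
    and "\<And>k. k \<le> Kpar X d \<Longrightarrow> greedy_net X d (scale k) (U k)"
    and "\<And>k. k \<le> Kpar X d \<Longrightarrow> is_f_k X d U k (f k)"
    and "\<And>k. k \<le> Kpar X d \<Longrightarrow> partition_on X (P k)"
    and "\<And>k p a b. k \<le> Kpar X d \<Longrightarrow> p \<in> P k \<Longrightarrow> a \<in> p \<Longrightarrow> b \<in> p \<Longrightarrow> d a b \<le> scale k"
  shows "\<forall>x\<in>X. \<forall>k < Kpar X d.
           (f k (ballS X d (part_of (P k) x) (scale k / 2)),
            f (Suc k) (ballS X d (part_of (P (Suc k)) x) (scale (Suc k) / 2))) \<in> arcs X d U k"
proof (intro ballI allI impI)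
  fix x k assume x: "x \<in> X" and k: "k < Kpar X d"
  note near = is_f_k_near_part[OF assms(3) assms(6) assms(7) assms(8) x]
  show "(f k (ballS X d (part_of (P k) x) (scale k / 2)),
         f (Suc k) (ballS X d (part_of (P (Suc k)) x) (scale (Suc k) / 2))) \<in> arcs X d U k"
    using k near[of k] near[of "Suc k"]
    by (intro arc_of_near_points[OF assms(1,3) assms(5) x]) auto
qed

end
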